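(* Let $(\mathcal V,\mathcal W,\lambda)$ be a FTvN system where $\mathcal V$ is finite dimensional with $\dim(\mathcal V)\ge 2$, and suppose that for $x,y\in\mathcal V$, $0=\langle x,y\rangle=\langle\lambda(x),\lambda(y)\rangle$ implies $x=0$ or $y=0$. Then $\{0\}$ and $\mathcal V$ are the only spectral cones in $\mathcal V$. Consequently, for any nonzero $u\in\mathcal V$, the convex cone generated by $[u]$ equals $\mathcal V$.
   Context: A Fan-Theobald-von Neumann (FTvN) system is a triple $(\mathcal V,\mathcal W,\lambda)$ where $\mathcal V,\mathcal W$ are real inner product spaces and $\lambda:\mathcal V\to\mathcal W$ is a map such that: (A1) $\|\lambda(x)\|=\|x\|$ for all $x$; (A2) $\langle x,y\rangle\le\langle\lambda(x),\lambda(y)\rangle$ for all $x,y$; (A3) for every $c\in\mathcal V$ and $q\in\lambda(\mathcal V)$ there exists $x$ with $\lambda(x)=q$ and $\langle c,x\rangle=\langle\lambda(c),\lambda(x)\rangle$. The $\lambda$-orbit of $u$ is $[u]=\{x:\lambda(x)=\lambda(u)\}$; a set $E$ is spectral if $x\in E\Rightarrow[x]\subseteq E$. A spectral cone is a (nonempty) spectral set that is also a convex cone. *)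

theory Defs
  imports "HOL-Analysis.Analysis"
begin

definition ftvn :: "('v::real_inner \<Rightarrow> 'w::real_inner) \<Rightarrow> bool" where
  "ftvn lam \<longleftrightarrow>
     (\<forall>x. norm (lam x) = norm x) \<and>
     (\<forall>x y. inner x y \<le> inner (lam x) (lam y)) \<and>
     (\<forall>c q. q \<in> range lam \<longrightarrow> (\<exists>x. lam x = q \<and> inner c x = inner (lam c) (lam x)))"

definition orbit :: "('v \<Rightarrow> 'w) \<Rightarrow> 'v \<Rightarrow> 'v set" where
  "orbit lam u = {x. lam x = lam u}"

definition spectral :: "('v \<Rightarrow> 'w) \<Rightarrow> 'v set \<Rightarrow> bool" where
  "spectral lam E \<longleftrightarrow> (\<forall>x\<in>E. orbit lam x \<subseteq> E)"

definition spectral_cone :: "('v::real_vector \<Rightarrow> 'w) \<Rightarrow> 'v set \<Rightarrow> bool" where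
  "spectral_cone lam E \<longleftrightarrow> spectral lam E \<and> convex_cone E"

end

theory Submission
  imports Defs
begin

text \<open>For fixed \<open>x \<noteq> 0\<close>, axioms (A2) and (A3) say that \<open>f c = \<langle>\<lambda>(c), \<lambda>(x)\<rangle>\<close> is the support
  function of the orbit \<open>[x]\<close>: a maximum of linear functionals, attained on \<open>[x]\<close>. Hence \<open>f\<close> is
  sublinear and continuous, and the orthogonality hypothesis forces \<open>f c \<noteq> 0\<close> for \<open>c \<noteq> 0\<close>.
  As the punctured space is connected in dimension at least 2 and \<open>f (-c) \<ge> - f c\<close>, \<open>f\<close> is
  positive there; so \<open>[x]\<close> lies in no closed half-space through 0, and by separation its convex
  conic hull is the whole space. A spectral cone containing \<open>x \<noteq> 0\<close> contains that hull.\<close>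

lemma ftvn_norm_eq: "ftvn lam \<Longrightarrow> norm (lam x) = norm x"
  by (simp add: ftvn_def)

lemma ftvn_inner_le: "ftvn lam \<Longrightarrow> inner x y \<le> inner (lam x) (lam y)"
  by (simp add: ftvn_def)

lemma ftvn_orbit_attains:
  assumes "ftvn lam"
  obtains z where "z \<in> orbit lam x" "inner c z = inner (lam c) (lam x)"
proof -
  obtain z where "lam z = lam x" "inner c z = inner (lam c) (lam z)"
    using assms unfolding ftvn_def by blast
  then show ?thesis
    using that by (simp add: orbit_def)
qed

lemma ftvn_inner_lam_subadditive:
  assumes "ftvn lam"
  shows "inner (lam (a + b)) (lam x) \<le> inner (lam a) (lam x) + inner (lam b) (lam x)"
proof -
  obtain z where z: "z \<in> orbit lam x" "inner (a + b) z = inner (lam (a + b)) (lam x)"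
    using ftvn_orbit_attains[OF assms] .
  then have "lam z = lam x"
    by (simp add: orbit_def)
  then show ?thesis
    using z(2) ftvn_inner_le[OF assms, of a z] ftvn_inner_le[OF assms, of b z]
    by (simp add: inner_add_left)
qed

lemma ftvn_inner_lam_le_norm:
  assumes "ftvn lam"
  shows "inner (lam a) (lam x) \<le> norm a * norm x"
  using norm_cauchy_schwarz[of "lam a" "lam x"] by (simp add: ftvn_norm_eq[OF assms])

lemma subadditive_bounded_lipschitz:
  fixes f :: "'a::real_normed_vector \<Rightarrow> real"
  assumes sub: "\<And>a b. f (a + b) \<le> f a + f b"
    and bound: "\<And>a. f a \<le> K * norm a"
    and "0 \<le> K"
  shows "K-lipschitz_on UNIV f"
proof (rule lipschitz_onI)
  fix a b :: 'a
  have "f a \<le> f b + K * dist a b"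
    using sub[of b "a - b"] bound[of "a - b"] by (simp add: dist_norm)
  moreover have "f b \<le> f a + K * dist a b"
    using sub[of a "b - a"] bound[of "b - a"] by (simp add: dist_norm norm_minus_commute)
  ultimately show "dist (f a) (f b) \<le> K * dist a b"
    by (simp add: dist_real_def abs_le_iff)
qed (fact \<open>0 \<le> K\<close>)

lemma continuous_on_ftvn_inner_lam:
  assumes "ftvn lam"
  shows "continuous_on S (\<lambda>c. inner (lam c) (lam x))"
proof -
  have "(norm x)-lipschitz_on UNIV (\<lambda>c. inner (lam c) (lam x))"
    by (rule subadditive_bounded_lipschitz)
      (simp_all add: ftvn_inner_lam_subadditive ftvn_inner_lam_le_norm assms mult.commute)
  then show ?thesis
    using continuous_on_subset lipschitz_on_continuous_on by blast
qed

lemma continuous_positive_on_punctured: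
  fixes g :: "'a::euclidean_space \<Rightarrow> real"
  assumes "2 \<le> DIM('a)" "continuous_on (- {0}) g"
    and nonzero: "\<And>c. c \<noteq> 0 \<Longrightarrow> g c \<noteq> 0"
    and antipodal: "\<And>c. - g c \<le> g (- c)"
    and "c \<noteq> 0"
  shows "0 < g c"
proof (rule ccontr)
  assume "\<not> 0 < g c"
  have "connected (g ` (- {0}))"
    using assms(1,2) connected_continuous_image connected_punctured_universe by blast
  moreover have "g c \<in> g ` (- {0})" "g (- c) \<in> g ` (- {0})"
    using \<open>c \<noteq> 0\<close> by auto
  moreover have "g c \<le> 0" "0 \<le> g (- c)"
    using \<open>\<not> 0 < g c\<close> antipodal[of c] by auto
  ultimately have "0 \<in> g ` (- {0})"
    unfolding connected_iff_interval by blast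
  then show False
    using nonzero by force
qed

lemma ftvn_inner_lam_pos:
  fixes lam :: "'v::euclidean_space \<Rightarrow> 'w::real_inner"
  assumes ftvn: "ftvn lam" and "2 \<le> DIM('v)"
    and orth: "\<And>x y. inner x y = 0 \<Longrightarrow> inner (lam x) (lam y) = 0 \<Longrightarrow> x = 0 \<or> y = 0"
    and "x \<noteq> 0" "c \<noteq> 0"
  shows "0 < inner (lam c) (lam x)"
proof (rule continuous_positive_on_punctured[where g = "\<lambda>c. inner (lam c) (lam x)"])
  fix c :: 'v
  assume "c \<noteq> 0"
  obtain z where z: "z \<in> orbit lam x" "inner c z = inner (lam c) (lam x)"
    using ftvn_orbit_attains[OF ftvn] .
  have "lam z = lam x"
    using z(1) by (simp add: orbit_def)
  then have "norm z = norm x"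
    using ftvn_norm_eq[OF ftvn] by metis
  then have "z \<noteq> 0"
    using \<open>x \<noteq> 0\<close> by auto
  then show "inner (lam c) (lam x) \<noteq> 0"
    using orth[of c z] z(2) \<open>lam z = lam x\<close> \<open>c \<noteq> 0\<close> by auto
next
  fix c :: 'v
  have "lam 0 = 0"
    using ftvn_norm_eq[OF ftvn, of 0] by simp
  then show "- inner (lam c) (lam x) \<le> inner (lam (- c)) (lam x)"
    using ftvn_inner_lam_subadditive[OF ftvn, of c "- c" x] by simp
qed (use assms continuous_on_ftvn_inner_lam in auto)

lemma conic_halfspace_ge_imp_nonneg:
  assumes "conic K" "\<And>y. y \<in> K \<Longrightarrow> b \<le> inner a y" "x \<in> K"
  shows "0 \<le> inner a x"
proof (rule ccontr)
  assume neg: "\<not> 0 \<le> inner a x"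
  have "b \<le> 0"
    using assms conic_contains_0[of K] by fastforce
  define t where "t = (b - 1) / inner a x"
  have "0 < t"
    using neg \<open>b \<le> 0\<close> by (simp add: t_def divide_neg_neg)
  then have "t *\<^sub>R x \<in> K"
    using assms(1,3) by (simp add: conicD)
  then have "b \<le> inner a (t *\<^sub>R x)"
    using assms(2) by blast
  moreover have "inner a (t *\<^sub>R x) = b - 1"
    using neg by (simp add: t_def)
  ultimately show False
    by simp
qed

lemma convex_cone_hull_eq_UNIV:
  fixes S :: "'a::euclidean_space set"
  assumes "\<And>c. c \<noteq> 0 \<Longrightarrow> \<exists>z\<in>S. 0 < inner c z"
  shows "convex_cone hull S = UNIV"
proof (rule ccontr)
  define K where "K = convex_cone hull S"
  assume "convex_cone hull S \<noteq> UNIV"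
  then obtain p where "p \<notin> K"
    by (auto simp: K_def)
  then have "0 \<notin> (+) (- p) ` K"
    by auto
  moreover have "convex ((+) (- p) ` K)"
    by (simp add: K_def convex_convex_cone_hull convex_translation)
  ultimately obtain a where "a \<noteq> 0" and sep: "\<forall>y\<in>(+) (- p) ` K. 0 \<le> inner a y"
    using separating_hyperplane_set_0 by blast
  have halfspace: "inner a p \<le> inner a y" if "y \<in> K" for y
  proof -
    have "0 \<le> inner a (- p + y)"
      using sep that by blast
    then show ?thesis
      by (simp add: inner_diff_right)
  qed
  have "conic K"
    by (simp add: K_def conic_convex_cone_hull)
  then have nonneg: "0 \<le> inner a y" if "y \<in> K" for y
    using conic_halfspace_ge_imp_nonneg halfspace that by blast
  obtain z where "z \<in> S" "0 < inner (- a) z"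
    using assms[of "- a"] \<open>a \<noteq> 0\<close> by auto
  then show False
    using nonneg[of z] hull_subset[of S convex_cone] by (auto simp: K_def)
qed

lemma spectral_cone_contains_convex_cone_hull_orbit:
  "spectral_cone lam E \<Longrightarrow> u \<in> E \<Longrightarrow> convex_cone hull (orbit lam u) \<subseteq> E"
  by (simp add: spectral_cone_def spectral_def hull_minimal)

theorem proposition6p9:
  fixes lam :: "'v::euclidean_space \<Rightarrow> 'w::real_inner"
  assumes "ftvn lam"
    and "DIM('v) \<ge> 2"
    and "\<And>x y. inner x y = 0 \<Longrightarrow> inner (lam x) (lam y) = 0 \<Longrightarrow> x = 0 \<or> y = 0"
  shows "(\<forall>E. spectral_cone lam E \<longrightarrow> E = {0} \<or> E = UNIV)
    \<and> (\<forall>u. u \<noteq> 0 \<longrightarrow> convex_cone hull (orbit lam u) = UNIV)"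
proof -
  have hull_orbit: "convex_cone hull (orbit lam u) = UNIV" if "u \<noteq> 0" for u
  proof (rule convex_cone_hull_eq_UNIV)
    fix c :: 'v
    assume "c \<noteq> 0"
    obtain z where "z \<in> orbit lam u" "inner c z = inner (lam c) (lam u)"
      using ftvn_orbit_attains[OF assms(1)] .
    then show "\<exists>z\<in>orbit lam u. 0 < inner c z"
      using ftvn_inner_lam_pos[OF assms \<open>u \<noteq> 0\<close> \<open>c \<noteq> 0\<close>] by metis
  qed
  have "E = {0} \<or> E = UNIV" if "spectral_cone lam E" for E
  proof -
    have "E \<noteq> {}"
      using that by (simp add: spectral_cone_def convex_cone_def)
    then consider "E = {0}" | u where "u \<in> E" "u \<noteq> 0"
      by blast
    then show ?thesis
      by cases (use that hull_orbit spectral_cone_contains_convex_cone_hull_orbit in blast)+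
  qed
  with hull_orbit show ?thesis
    by blast
qed

end
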